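(* Let $\beta\ge0$ and $n>0$ be integers. Then $$C_\beta(n)=\sum_{\substack{d\mid (n+\beta)\\ \beta d<n+\beta}} E(d),$$ where $d$ ranges over positive divisors of $n+\beta$.
   Context: Define on triples of integers $\Gamma_{\beta,1}(\tau_1,\tau_2,\tau_3)=(\tau_2,\tau_3,\tau_2+\tau_3+\beta)$ and $\Gamma_{\beta,2}(\tau_1,\tau_2,\tau_3)=(\tau_1,\tau_3,\tau_1+\tau_3+\beta)$. For integers $\alpha\ge1$, $\beta\ge0$, the $(\alpha,\beta)$-Euclid tree is the set of triples obtained from the root $(\alpha,\alpha,2\alpha+\beta)$ by finitely many (possibly zero) applications of $\Gamma_{\beta,1},\Gamma_{\beta,2}$; $\max T$ is the largest entry of $T$. Define $C_\beta(n)=\#\{T: T\text{ is on the }(\alpha,\beta)\text{-Euclid tree for some integer }\alpha\ge1,\ \max T=n\}+1$ (distinct triples counted). Define $E(1)=1$ and, for $n\ge2$, $E(n)=\#\{T: T\text{ is on the }(1,0)\text{-Euclid tree},\ \max T=n\}$. *)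

theory Defs
  imports Main
begin

type_synonym triple = "int \<times> int \<times> int"

definition Gamma1 :: "int \<Rightarrow> triple \<Rightarrow> triple" where
  "Gamma1 \<beta> T = (case T of (t1, t2, t3) \<Rightarrow> (t2, t3, t2 + t3 + \<beta>))"

definition Gamma2 :: "int \<Rightarrow> triple \<Rightarrow> triple" where
  "Gamma2 \<beta> T = (case T of (t1, t2, t3) \<Rightarrow> (t1, t3, t1 + t3 + \<beta>))"

inductive_set euclid_tree :: "int \<Rightarrow> int \<Rightarrow> triple set" for \<alpha> \<beta> where
  root: "(\<alpha>, \<alpha>, 2 * \<alpha> + \<beta>) \<in> euclid_tree \<alpha> \<beta>"
| step1: "T \<in> euclid_tree \<alpha> \<beta> \<Longrightarrow> Gamma1 \<beta> T \<in> euclid_tree \<alpha> \<beta>"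
| step2: "T \<in> euclid_tree \<alpha> \<beta> \<Longrightarrow> Gamma2 \<beta> T \<in> euclid_tree \<alpha> \<beta>"

definition maxT :: "triple \<Rightarrow> int" where
  "maxT T = (case T of (a, b, c) \<Rightarrow> max a (max b c))"

definition C :: "nat \<Rightarrow> nat \<Rightarrow> nat" where
  "C \<beta> n = card {T. \<exists>\<alpha>::int. \<alpha> \<ge> 1 \<and> T \<in> euclid_tree \<alpha> (int \<beta>) \<and> maxT T = int n} + 1"

definition E :: "nat \<Rightarrow> nat" where
  "E n = (if n = 1 then 1 else card {T. T \<in> euclid_tree 1 0 \<and> maxT T = int n})"

end

theory Submission imports Defs begin

text \<open>Every node of the \<open>(\<alpha>,\<beta>)\<close>-Euclid tree has the form \<open>(k a - \<beta>, k b - \<beta>, k (a + b) - \<beta>)\<close>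
  with \<open>k = \<alpha> + \<beta>\<close> and \<open>(a, b)\<close> a coprime pair with \<open>0 < a \<le> b\<close>; conversely every such pair
  occurs, since \<open>Gamma1\<close> and \<open>Gamma2\<close> act on \<open>(a, b)\<close> as the two inverse steps
  \<open>(a, b) \<mapsto> (b, a + b)\<close> and \<open>(a, b) \<mapsto> (a, a + b)\<close> of the subtractive Euclidean algorithm.
  The largest entry is \<open>k (a + b) - \<beta>\<close>, so the triples with largest entry \<open>n\<close> correspond to
  factorisations \<open>n + \<beta> = k d\<close> with \<open>k > \<beta>\<close> together with a coprime pair of sum \<open>d\<close>. Since
  \<open>k = gcd (k a) (k b)\<close>, the triple determines \<open>k\<close>, \<open>d\<close> and the pair, and counting the pairs of
  sum \<open>d\<close> is exactly what \<open>E d\<close> does for the \<open>(1,0)\<close>-tree. The divisor \<open>d = 1\<close> admits no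
  pair; it accounts for the \<open>+ 1\<close> in \<open>C\<close> and the convention \<open>E 1 = 1\<close>.\<close>

definition scaled_triple :: "int \<Rightarrow> int \<Rightarrow> int \<Rightarrow> int \<Rightarrow> triple" where
  "scaled_triple k \<beta> a b = (k * a - \<beta>, k * b - \<beta>, k * (a + b) - \<beta>)"

definition primitive_pairs :: "int \<Rightarrow> (int \<times> int) set" where
  "primitive_pairs d = {(a, b). 0 < a \<and> a \<le> b \<and> coprime a b \<and> a + b = d}"

lemma euclid_tree_scaled_triple:
  assumes "T \<in> euclid_tree \<alpha> \<beta>"
  shows "\<exists>a b. 0 < a \<and> a \<le> b \<and> coprime a b \<and> T = scaled_triple (\<alpha> + \<beta>) \<beta> a b"
  using assms
proof (induction rule: euclid_tree.induct)
  case root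
  show ?case
    by (rule exI[of _ 1], rule exI[of _ 1]) (simp add: scaled_triple_def algebra_simps)
next
  case (step1 T)
  then obtain a b where "0 < a" "a \<le> b" "coprime a b" "T = scaled_triple (\<alpha> + \<beta>) \<beta> a b"
    by blast
  then have "0 < b \<and> b \<le> a + b \<and> coprime b (a + b)
      \<and> Gamma1 \<beta> T = scaled_triple (\<alpha> + \<beta>) \<beta> b (a + b)"
    using gcd_add2[of b a] by (simp add: Gamma1_def scaled_triple_def coprime_iff_gcd_eq_1 gcd.commute algebra_simps)
  then show ?case by blast
next
  case (step2 T)
  then obtain a b where "0 < a" "a \<le> b" "coprime a b" "T = scaled_triple (\<alpha> + \<beta>) \<beta> a b"
    by blast
  then have "0 < a \<and> a \<le> a + b \<and> coprime a (a + b)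
      \<and> Gamma2 \<beta> T = scaled_triple (\<alpha> + \<beta>) \<beta> a (a + b)"
    by (simp add: Gamma2_def scaled_triple_def coprime_iff_gcd_eq_1 algebra_simps)
  then show ?case by blast
qed

lemma scaled_triple_in_euclid_tree:
  assumes "0 < a" "a \<le> b" "coprime a b"
  shows "scaled_triple k \<beta> a b \<in> euclid_tree (k - \<beta>) \<beta>"
  using assms
proof (induction "nat b" arbitrary: a b rule: less_induct)
  case less
  show ?case
  proof (cases "a = b")
    case True
    with less.prems have "a = 1"
      by (metis coprime_self zdvd1_eq abs_of_pos)
    with True have "scaled_triple k \<beta> a b = (k - \<beta>, k - \<beta>, 2 * (k - \<beta>) + \<beta>)"
      by (simp add: scaled_triple_def algebra_simps)
    then show ?thesis using euclid_tree.root[of "k - \<beta>" \<beta>] by simp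
  next
    case False
    define c where "c = b - a"
    have "coprime a c"
      using less.prems(3) gcd_diff1[of b a] by (simp add: c_def coprime_iff_gcd_eq_1 gcd.commute)
    show ?thesis
    proof (cases "c \<le> a")
      case True
      have "scaled_triple k \<beta> c a \<in> euclid_tree (k - \<beta>) \<beta>"
        using less.hyps[of a c] less.prems False True \<open>coprime a c\<close>
        by (simp add: c_def coprime_commute)
      from euclid_tree.step1[OF this] show ?thesis
        by (simp add: Gamma1_def scaled_triple_def c_def algebra_simps)
    next
      case False
      have "scaled_triple k \<beta> a c \<in> euclid_tree (k - \<beta>) \<beta>"
        using less.hyps[of c a] less.prems \<open>a \<noteq> b\<close> False \<open>coprime a c\<close> by (simp add: c_def)
      from euclid_tree.step2[OF this] show ?thesis
        by (simp add: Gamma2_def scaled_triple_def c_def algebra_simps)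
    qed
  qed
qed

lemma maxT_scaled_triple:
  assumes "0 < k" "0 < a" "a \<le> b"
  shows "maxT (scaled_triple k \<beta> a b) = k * (a + b) - \<beta>"
proof -
  have "k * a \<le> k * b" "k * b \<le> k * (a + b)"
    using assms by (simp_all add: mult_left_mono)
  then show ?thesis by (simp add: maxT_def scaled_triple_def)
qed

lemma scaled_triple_inj:
  assumes "0 < k" "0 < k'" "coprime a b" "coprime a' b'"
    and "scaled_triple k \<beta> a b = scaled_triple k' \<beta> a' b'"
  shows "k = k' \<and> a = a' \<and> b = b'"
proof -
  have "k * a = k' * a'" "k * b = k' * b'"
    using assms(5) by (simp_all add: scaled_triple_def)
  moreover have "gcd (k * a) (k * b) = k" "gcd (k' * a') (k' * b') = k'"
    using assms(1-4) gcd_mult_distrib_int[of k a b] gcd_mult_distrib_int[of k' a' b'] by simp_all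
  ultimately have "k = k'" by simp
  with \<open>k * a = k' * a'\<close> \<open>k * b = k' * b'\<close> \<open>0 < k\<close> show ?thesis by simp
qed

lemma finite_primitive_pairs: "finite (primitive_pairs d)"
proof (rule finite_subset)
  show "primitive_pairs d \<subseteq> {0..d} \<times> {0..d}"
    by (auto simp: primitive_pairs_def)
qed simp

lemma primitive_pairs_one: "primitive_pairs 1 = {}"
  by (auto simp: primitive_pairs_def)

lemma E_eq_card_primitive_pairs:
  assumes "d \<noteq> 1"
  shows "E d = card (primitive_pairs (int d))"
proof -
  let ?f = "\<lambda>(a, b). scaled_triple 1 0 a b"
  have "{T. T \<in> euclid_tree 1 0 \<and> maxT T = int d} = ?f ` primitive_pairs (int d)"
  proof (intro equalityI subsetI)
    fix T assume "T \<in> {T. T \<in> euclid_tree 1 0 \<and> maxT T = int d}"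
    then obtain a b where "0 < a" "a \<le> b" "coprime a b" "T = scaled_triple 1 0 a b" "maxT T = int d"
      using euclid_tree_scaled_triple[of T 1 0] by auto
    then show "T \<in> ?f ` primitive_pairs (int d)"
      by (auto simp: primitive_pairs_def maxT_scaled_triple image_iff)
  next
    fix T assume "T \<in> ?f ` primitive_pairs (int d)"
    then show "T \<in> {T. T \<in> euclid_tree 1 0 \<and> maxT T = int d}"
      using scaled_triple_in_euclid_tree[of _ _ 1 0]
      by (auto simp: primitive_pairs_def maxT_scaled_triple)
  qed
  moreover have "inj_on ?f (primitive_pairs (int d))"
    by (auto intro!: inj_onI simp: scaled_triple_def)
  ultimately show ?thesis
    using assms by (simp add: E_def card_image)
qed

definition level_triple :: "nat \<Rightarrow> nat \<Rightarrow> nat \<times> int \<times> int \<Rightarrow> triple" where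
  "level_triple \<beta> n = (\<lambda>(d, a, b). scaled_triple (int ((n + \<beta>) div d)) (int \<beta>) a b)"

lemma level_set_eq_image:
  "{T. \<exists>\<alpha>::int. \<alpha> \<ge> 1 \<and> T \<in> euclid_tree \<alpha> (int \<beta>) \<and> maxT T = int n}
    = level_triple \<beta> n ` (SIGMA d:{d. d > 0 \<and> d dvd (n + \<beta>) \<and> \<beta> * d < n + \<beta>}.
        primitive_pairs (int d))"
  (is "?S = level_triple \<beta> n ` ?P")
proof (intro equalityI subsetI)
  fix T assume "T \<in> ?S"
  then obtain \<alpha> where "\<alpha> \<ge> 1" "T \<in> euclid_tree \<alpha> (int \<beta>)" and max: "maxT T = int n"
    by blast
  then obtain a b where ab: "0 < a" "a \<le> b" "coprime a b"
      and T: "T = scaled_triple (\<alpha> + int \<beta>) (int \<beta>) a b"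
    using euclid_tree_scaled_triple by blast
  define k where "k = nat (\<alpha> + int \<beta>)"
  define d where "d = nat (a + b)"
  have "\<beta> < k" "0 < d" and k: "int k = \<alpha> + int \<beta>" and d: "int d = a + b"
    using \<open>\<alpha> \<ge> 1\<close> ab by (simp_all add: k_def d_def)
  have "int (k * d) = int (n + \<beta>)"
    using max ab \<open>\<alpha> \<ge> 1\<close> by (simp add: T k d maxT_scaled_triple)
  then have kd: "k * d = n + \<beta>"
    by (simp only: of_nat_eq_iff)
  have "\<beta> * d < k * d"
    using \<open>\<beta> < k\<close> \<open>0 < d\<close> by simp
  with kd \<open>0 < d\<close> have "d \<in> {d. d > 0 \<and> d dvd (n + \<beta>) \<and> \<beta> * d < n + \<beta>}"
    by (auto intro: dvd_triv_right[of d k, unfolded kd])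
  moreover have "(a, b) \<in> primitive_pairs (int d)"
    using ab d by (simp add: primitive_pairs_def)
  moreover have "(n + \<beta>) div d = k"
    using \<open>0 < d\<close> by (simp flip: kd)
  ultimately show "T \<in> level_triple \<beta> n ` ?P"
    by (force simp: level_triple_def T k)
next
  fix T assume "T \<in> level_triple \<beta> n ` ?P"
  then obtain d a b where d: "0 < d" "d dvd (n + \<beta>)" "\<beta> * d < n + \<beta>"
    and ab: "0 < a" "a \<le> b" "coprime a b" "a + b = int d"
    and T: "T = scaled_triple (int ((n + \<beta>) div d)) (int \<beta>) a b"
    by (auto simp: level_triple_def primitive_pairs_def)
  define k where "k = (n + \<beta>) div d"
  have "k * d = n + \<beta>" using d(2) by (simp add: k_def)
  with d(3) have "\<beta> < k" by (metis mult_less_cancel2)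
  have "T \<in> euclid_tree (int k - int \<beta>) (int \<beta>)"
    using scaled_triple_in_euclid_tree[OF ab(1-3)] T by (simp add: k_def)
  moreover have "maxT T = int n"
    using T ab \<open>\<beta> < k\<close> \<open>k * d = n + \<beta>\<close> maxT_scaled_triple[of "int k" a b "int \<beta>"]
    by (simp add: k_def) (metis of_nat_add of_nat_mult add_diff_cancel_right')
  ultimately show "T \<in> ?S"
    using \<open>\<beta> < k\<close> by (auto intro!: exI[of _ "int k - int \<beta>"])
qed

lemma inj_on_level_triple:
  assumes "n > 0"
  shows "inj_on (level_triple \<beta> n) (SIGMA d:{d. d dvd (n + \<beta>)}. primitive_pairs (int d))"
proof (rule inj_onI, clarsimp)
  fix d a b d' a' b'
  assume "d dvd n + \<beta>" "d' dvd n + \<beta>"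
    and ab: "(a, b) \<in> primitive_pairs (int d)" and ab': "(a', b') \<in> primitive_pairs (int d')"
    and eq: "level_triple \<beta> n (d, a, b) = level_triple \<beta> n (d', a', b')"
  have pos: "0 < (n + \<beta>) div d" "0 < (n + \<beta>) div d'"
    using assms \<open>d dvd n + \<beta>\<close> \<open>d' dvd n + \<beta>\<close> by (metis add_gr_0 dvd_div_eq_0_iff gr0I)+
  have scaled_eq: "scaled_triple (int ((n + \<beta>) div d)) (int \<beta>) a b
      = scaled_triple (int ((n + \<beta>) div d')) (int \<beta>) a' b'"
    using eq by (simp add: level_triple_def)
  have "a = a' \<and> b = b'"
    using scaled_triple_inj[OF _ _ _ _ scaled_eq] pos ab ab' by (simp add: primitive_pairs_def)
  with ab ab' show "d = d' \<and> a = a' \<and> b = b'"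
    by (simp add: primitive_pairs_def)
qed

theorem lemma3p3:
  fixes \<beta> n :: nat
  assumes "n > 0"
  shows "C \<beta> n = (\<Sum>d \<in> {d. d > 0 \<and> d dvd (n + \<beta>) \<and> \<beta> * d < n + \<beta>}. E d)"
proof -
  let ?D = "{d. d > 0 \<and> d dvd (n + \<beta>) \<and> \<beta> * d < n + \<beta>}"
  have "finite ?D"
    by (rule finite_subset[of _ "{..n + \<beta>}"]) (auto intro: dvd_imp_le)
  have "1 \<in> ?D" using assms by simp
  have "inj_on (level_triple \<beta> n) (SIGMA d:?D. primitive_pairs (int d))"
    by (rule inj_on_subset[OF inj_on_level_triple[OF assms]]) auto
  then have "C \<beta> n = (\<Sum>d\<in>?D. card (primitive_pairs (int d))) + 1"
    using \<open>finite ?D\<close> by (simp add: C_def level_set_eq_image card_image finite_primitive_pairs)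
  also have "\<dots> = (\<Sum>d\<in>?D - {1}. card (primitive_pairs (int d))) + E 1"
    using sum.remove[OF \<open>finite ?D\<close> \<open>1 \<in> ?D\<close>, of "\<lambda>d. card (primitive_pairs (int d))"]
    by (simp add: primitive_pairs_one E_def)
  also have "\<dots> = (\<Sum>d\<in>?D - {1}. E d) + E 1"
    by (simp add: E_eq_card_primitive_pairs)
  also have "\<dots> = (\<Sum>d\<in>?D. E d)"
    using sum.remove[OF \<open>finite ?D\<close> \<open>1 \<in> ?D\<close>, of E] by simp
  finally show ?thesis .
qed

end
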